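(* Let $\mathcal{S}$ be a semifilter. Then the subspace $(2^\omega\times 2^\omega)\setminus\big(\mathsf{Fin}\times(2^\omega\setminus\mathcal{S})\big)$ of $2^\omega\times2^\omega$ is homeomorphic to a semifilter.
   Context: $\mathsf{Fin}=\{x\subseteq\omega: x\text{ finite}\}$. A semifilter (on $\omega$) is a collection $\mathcal{S}\subseteq\mathcal{P}(\omega)$ such that $\varnothing\notin\mathcal{S}$, $\omega\in\mathcal{S}$, $\mathcal{S}$ is closed under finite modifications (if $x\in\mathcal{S}$ and $y\subseteq\omega$ with $(x\setminus y)\cup(y\setminus x)$ finite then $y\in\mathcal{S}$), and $\mathcal{S}$ is upward-closed. Subsets of $\mathcal{P}(\omega)$ are identified via characteristic functions with subspaces of $2^\omega$. *)

theory Defs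
  imports "HOL-Analysis.Analysis"
begin

text \<open>Subsets of omega are identified with characteristic functions nat => bool.\<close>

definition Cantor :: "(nat \<Rightarrow> bool) topology" where
  "Cantor = product_topology (\<lambda>_. discrete_topology (UNIV :: bool set)) (UNIV :: nat set)"

definition Fin :: "(nat \<Rightarrow> bool) set" where
  "Fin = {x. finite {n. x n}}"

definition semifilter :: "(nat \<Rightarrow> bool) set \<Rightarrow> bool" where
  "semifilter S \<longleftrightarrow>
     (\<lambda>_. False) \<notin> S \<and>
     (\<lambda>_. True) \<in> S \<and>
     (\<forall>x y. x \<in> S \<and> finite {n. x n \<noteq> y n} \<longrightarrow> y \<in> S) \<and>
     (\<forall>x y. x \<in> S \<and> (\<forall>n. x n \<longrightarrow> y n) \<longrightarrow> y \<in> S)"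

end

theory Submission
  imports Defs
begin

text \<open>Interleaving x and y into the sequence x 0, y 0, x 1, y 1, ... is a homeomorphism
  from the square of the Cantor space onto the Cantor space. It carries the subspace
  in question onto the set of sequences whose even part is infinite or whose odd part
  lies in S, and this set is a semifilter because both the infinite sets and S are.\<close>

definition evens :: "(nat \<Rightarrow> 'a) \<Rightarrow> nat \<Rightarrow> 'a" where
  "evens z = (\<lambda>n. z (2 * n))"

definition odds :: "(nat \<Rightarrow> 'a) \<Rightarrow> nat \<Rightarrow> 'a" where
  "odds z = (\<lambda>n. z (Suc (2 * n)))"

definition interleave :: "(nat \<Rightarrow> 'a) \<times> (nat \<Rightarrow> 'a) \<Rightarrow> nat \<Rightarrow> 'a" where
  "interleave p k = (if even k then fst p (k div 2) else snd p (k div 2))"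

lemma evens_interleave [simp]: "evens (interleave p) = fst p"
  by (simp add: evens_def interleave_def)

lemma odds_interleave [simp]: "odds (interleave p) = snd p"
  by (simp add: odds_def interleave_def)

lemma interleave_evens_odds [simp]: "interleave (evens z, odds z) = z"
proof
  fix k
  show "interleave (evens z, odds z) k = z k"
    by (cases "even k") (auto simp: interleave_def evens_def odds_def elim!: evenE oddE)
qed

lemma continuous_map_Cantor_iff_coordinates:
  "continuous_map X Cantor f \<longleftrightarrow>
     (\<forall>k. continuous_map X (discrete_topology UNIV) (\<lambda>x. f x k))"
  by (simp add: Cantor_def continuous_map_componentwise_UNIV)

lemma continuous_map_Cantor_coordinate:
  "continuous_map Cantor (discrete_topology UNIV) (\<lambda>z. z k)"
  unfolding Cantor_def by (rule continuous_map_product_projection) simp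

lemma continuous_map_Cantor_reindex:
  "continuous_map Cantor Cantor (\<lambda>z n. z (f n))"
  by (simp add: continuous_map_Cantor_iff_coordinates continuous_map_Cantor_coordinate)

lemma continuous_map_interleave:
  "continuous_map (prod_topology Cantor Cantor) Cantor interleave"
  unfolding continuous_map_Cantor_iff_coordinates
proof
  fix k :: nat
  let ?coord = "\<lambda>z. z (k div 2)"
  have "continuous_map (prod_topology Cantor Cantor) (discrete_topology UNIV) (?coord \<circ> fst)"
       "continuous_map (prod_topology Cantor Cantor) (discrete_topology UNIV) (?coord \<circ> snd)"
    by (rule continuous_map_compose[OF continuous_map_fst continuous_map_Cantor_coordinate]
             continuous_map_compose[OF continuous_map_snd continuous_map_Cantor_coordinate])+
  moreover have "(\<lambda>p. interleave p k) = (if even k then ?coord \<circ> fst else ?coord \<circ> snd)"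
    by (auto simp: interleave_def)
  ultimately show "continuous_map (prod_topology Cantor Cantor) (discrete_topology UNIV)
                     (\<lambda>p. interleave p k)"
    by metis
qed

lemma homeomorphic_map_interleave:
  "homeomorphic_map (prod_topology Cantor Cantor) Cantor interleave"
proof -
  have "continuous_map Cantor (prod_topology Cantor Cantor) (\<lambda>z. (evens z, odds z))"
    unfolding continuous_map_paired evens_def odds_def
    by (simp add: continuous_map_Cantor_reindex)
  then have "homeomorphic_maps (prod_topology Cantor Cantor) Cantor
               interleave (\<lambda>z. (evens z, odds z))"
    by (simp add: homeomorphic_maps_def continuous_map_interleave)
  then show ?thesis
    using homeomorphic_map_maps by blast
qed

lemma semifilter_finite_modification:
  "semifilter S \<Longrightarrow> x \<in> S \<Longrightarrow> finite {n. x n \<noteq> y n} \<Longrightarrow> y \<in> S"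
  unfolding semifilter_def by blast

lemma semifilter_upward:
  "semifilter S \<Longrightarrow> x \<in> S \<Longrightarrow> (\<And>n. x n \<Longrightarrow> y n) \<Longrightarrow> y \<in> S"
  unfolding semifilter_def by blast

lemma finite_disagreement_reindex:
  assumes "inj f" and "finite {k. z k \<noteq> w k}"
  shows "finite {n. z (f n) \<noteq> w (f n)}"
proof -
  have "{n. z (f n) \<noteq> w (f n)} = f -` {k. z k \<noteq> w k}"
    by auto
  then show ?thesis
    using finite_vimageI[OF assms(2,1)] by simp
qed

lemma semifilter_infinite: "semifilter (UNIV - Fin)"
  unfolding semifilter_def Fin_def
proof (intro conjI allI impI)
  fix x y :: "nat \<Rightarrow> bool"
  assume "x \<in> UNIV - {x. finite {n. x n}} \<and> finite {n. x n \<noteq> y n}"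
  moreover have "{n. x n} \<subseteq> {n. y n} \<union> {n. x n \<noteq> y n}"
    by auto
  ultimately show "y \<in> UNIV - {x. finite {n. x n}}"
    using finite_subset by auto
next
  fix x y :: "nat \<Rightarrow> bool"
  assume "x \<in> UNIV - {x. finite {n. x n}} \<and> (\<forall>n. x n \<longrightarrow> y n)"
  then show "y \<in> UNIV - {x. finite {n. x n}}"
    using finite_subset[of "{n. x n}" "{n. y n}"] by auto
qed simp_all

lemma semifilter_evens_or_odds:
  assumes A: "semifilter A" and B: "semifilter B"
  shows "semifilter {z. evens z \<in> A \<or> odds z \<in> B}"
  unfolding semifilter_def mem_Collect_eq
proof (intro conjI allI impI)
  show "\<not> (evens (\<lambda>_. False) \<in> A \<or> odds (\<lambda>_. False) \<in> B)"
    using A B by (simp add: semifilter_def evens_def odds_def)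
  show "evens (\<lambda>_. True) \<in> A \<or> odds (\<lambda>_. True) \<in> B"
    using A by (simp add: semifilter_def evens_def)
next
  fix x y :: "nat \<Rightarrow> bool"
  assume x: "(evens x \<in> A \<or> odds x \<in> B) \<and> finite {n. x n \<noteq> y n}"
  have "finite {n. evens x n \<noteq> evens y n}" "finite {n. odds x n \<noteq> odds y n}"
    unfolding evens_def odds_def
    by (rule finite_disagreement_reindex[OF _ conjunct2[OF x]], simp add: inj_def)+
  then show "evens y \<in> A \<or> odds y \<in> B"
    using x A B semifilter_finite_modification by blast
next
  fix x y :: "nat \<Rightarrow> bool"
  assume "(evens x \<in> A \<or> odds x \<in> B) \<and> (\<forall>n. x n \<longrightarrow> y n)"
  then show "evens y \<in> A \<or> odds y \<in> B"
    unfolding evens_def odds_def by (meson A B semifilter_upward)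
qed

theorem lemma8p3:
  assumes "semifilter S"
  shows "\<exists>T. semifilter T \<and>
    subtopology (prod_topology Cantor Cantor) (UNIV - Fin \<times> (UNIV - S))
      homeomorphic_space subtopology Cantor T"
proof (intro exI conjI)
  let ?T = "{z. evens z \<in> UNIV - Fin \<or> odds z \<in> S}"
  show "semifilter ?T"
    by (rule semifilter_evens_or_odds[OF semifilter_infinite assms])
  have "interleave p \<in> ?T \<longleftrightarrow> p \<in> UNIV - Fin \<times> (UNIV - S)" for p
    by (cases p) (auto simp: Fin_def)
  then have "homeomorphic_map (subtopology (prod_topology Cantor Cantor) (UNIV - Fin \<times> (UNIV - S)))
               (subtopology Cantor ?T) interleave"
    by (intro homeomorphic_map_subtopologies_alt[OF homeomorphic_map_interleave]) simp
  then show "subtopology (prod_topology Cantor Cantor) (UNIV - Fin \<times> (UNIV - S))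
               homeomorphic_space subtopology Cantor ?T"
    using homeomorphic_space by blast
qed

end
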